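(* Let $p$ be a prime, $\Phi:\mathbb{N}\to\mathbb{N}$ strictly increasing, and $f:\mathbb{Z}_p\to\mathbb{Z}_p$ continuous. Then $f\in\mathcal{F}(\Phi)$ if and only if $v_p(B(\Phi,f;m))\ge \tau(\Phi;m)$ for every nonnegative integer $m$.
   Context: $\mathbb{N}=\{0,1,2,\dots\}$. $v_p$, $|\cdot|_p$ are the $p$-adic valuation and absolute value ($v_p(p)=1$, $|p|_p=p^{-1}$). For a nonnegative integer $m$, $m_i$ denote its base-$p$ digits. Set $\Phi(-1):=-1$. $\tau(\Phi;m):=\min\{h\in\mathbb{N}: m<p^{1+\Phi(h)}\}$. For $m\ge p^{1+\Phi(0)}$, $M(m):=\sum_{i=\Phi(\tau(\Phi;m)-1)+1}^{\Phi(\tau(\Phi;m))} m_ip^i$. Define $B(\Phi,f;m):=f(m)$ if $m<p^{1+\Phi(0)}$ and $B(\Phi,f;m):=f(m)-f(m-M(m))$ otherwise (these are the unique coefficients with $f(x)=\sum_m B(\Phi,f;m)\chi(\Phi,m;x)$, where $\chi(\Phi,m;x)=1$ if $|x-m|_p\le p^{-1-\Phi(\tau(\Phi;m))}$ and $0$ otherwise). $\mathcal{F}(\Phi)$ is the class of continuous $f:\mathbb{Z}_p\to\mathbb{Z}_p$ such that for every positive integer $n$ and all $x,y\in\mathbb{Z}_p$: if $|x-y|_p\le p^{-1-\Phi(n-1)}$ then $|f(x)-f(y)|_p\le p^{-n}$. *)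

theory Defs
  imports Complex_Main "HOL-Library.Extended_Nat" "HOL-Computational_Algebra.Primes"
begin

text \<open>p-adic integers, represented as coherent sequences of residues:
  x n is the residue of x modulo p^n, in [0, p^n).\<close>

type_synonym zp = "nat \<Rightarrow> int"

definition Zp :: "nat \<Rightarrow> zp set" where
  "Zp p = {x. \<forall>n. 0 \<le> x n \<and> x n < int p ^ n \<and> x n = x (Suc n) mod (int p ^ n)}"

definition zp_of_nat :: "nat \<Rightarrow> nat \<Rightarrow> zp" where
  "zp_of_nat p m = (\<lambda>n. int m mod (int p ^ n))"

definition zp_diff :: "nat \<Rightarrow> zp \<Rightarrow> zp \<Rightarrow> zp" where
  "zp_diff p x y = (\<lambda>n. (x n - y n) mod (int p ^ n))"

definition zp_val :: "nat \<Rightarrow> zp \<Rightarrow> enat" where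
  "zp_val p x = (if (\<forall>n. x n = 0) then \<infinity> else enat (LEAST n. x (Suc n) \<noteq> 0))"

definition zp_abs :: "nat \<Rightarrow> zp \<Rightarrow> real" where
  "zp_abs p x = (case zp_val p x of \<infinity> \<Rightarrow> 0 | enat k \<Rightarrow> (1 / real p) ^ k)"

definition zp_continuous :: "nat \<Rightarrow> (zp \<Rightarrow> zp) \<Rightarrow> bool" where
  "zp_continuous p f \<longleftrightarrow> f ` Zp p \<subseteq> Zp p \<and>
     (\<forall>x\<in>Zp p. \<forall>e>0. \<exists>d>0. \<forall>y\<in>Zp p.
        zp_abs p (zp_diff p x y) < d \<longrightarrow> zp_abs p (zp_diff p (f x) (f y)) < e)"

definition digit :: "nat \<Rightarrow> nat \<Rightarrow> nat \<Rightarrow> nat" where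
  "digit p m i = m div p ^ i mod p"

definition tau :: "nat \<Rightarrow> (nat \<Rightarrow> nat) \<Rightarrow> nat \<Rightarrow> nat" where
  "tau p \<Phi> m = (LEAST h. m < p ^ (1 + \<Phi> h))"

text \<open>M(m), used only when m \<ge> p^(1+\<Phi>(0)) (so that tau \<ge> 1 and \<Phi>(tau-1) is defined).\<close>
definition Mblock :: "nat \<Rightarrow> (nat \<Rightarrow> nat) \<Rightarrow> nat \<Rightarrow> nat" where
  "Mblock p \<Phi> m = (\<Sum>i = \<Phi> (tau p \<Phi> m - 1) + 1 .. \<Phi> (tau p \<Phi> m). digit p m i * p ^ i)"

definition Bcoef :: "nat \<Rightarrow> (nat \<Rightarrow> nat) \<Rightarrow> (zp \<Rightarrow> zp) \<Rightarrow> nat \<Rightarrow> zp" where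
  "Bcoef p \<Phi> f m = (if m < p ^ (1 + \<Phi> 0) then f (zp_of_nat p m)
     else zp_diff p (f (zp_of_nat p m)) (f (zp_of_nat p (m - Mblock p \<Phi> m))))"

definition FF :: "nat \<Rightarrow> (nat \<Rightarrow> nat) \<Rightarrow> (zp \<Rightarrow> zp) set" where
  "FF p \<Phi> = {f. zp_continuous p f \<and>
     (\<forall>n>0. \<forall>x\<in>Zp p. \<forall>y\<in>Zp p.
        zp_abs p (zp_diff p x y) \<le> (1 / real p) ^ (1 + \<Phi> (n - 1)) \<longrightarrow>
        zp_abs p (zp_diff p (f x) (f y)) \<le> (1 / real p) ^ n)}"

end

theory Submission
  imports Defs
begin

text \<open>Two points of Z_p are within p^-k of each other iff they agree modulo p^k. Hence
  f \<in> F(\<Phi>) says that f(x) mod p^n depends only on x mod p^(1+\<Phi>(n-1)), whereas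
  v_p(B(m)) \<ge> \<tau>(m) says that f(m) and f(m - M(m)) agree modulo p^\<tau>(m), where
  m - M(m) = m mod p^(1+\<Phi>(\<tau>(m)-1)). So the first condition immediately implies the second.
  Conversely, strong induction along m \<mapsto> m - M(m) gives the first condition on the nonnegative
  integers, and continuity of f extends it to all of Z_p, in which they are dense.\<close>

lemma Zp_D:
  assumes "x \<in> Zp p"
  shows "0 \<le> x n" "x n < int p ^ n" "x n = x (Suc n) mod int p ^ n"
  using assms unfolding Zp_def by blast+

lemma Zp_coherent:
  assumes "x \<in> Zp p" "j \<le> k"
  shows "x j = x k mod int p ^ j"
  using assms(2)
proof (induction k rule: dec_induct)
  case base
  show ?case using Zp_D(1,2)[OF assms(1), of j] by simp
next
  case (step k)
  have "x k mod int p ^ j = x (Suc k) mod int p ^ k mod int p ^ j"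
    using Zp_D(3)[OF assms(1), of k] by simp
  also have "\<dots> = x (Suc k) mod int p ^ j"
    using step.hyps by (simp add: mod_mod_cancel le_imp_power_dvd)
  finally show ?case using step.IH by simp
qed

lemma Zp_eq_at_le:
  assumes "x \<in> Zp p" "y \<in> Zp p" "x k = y k" "j \<le> k"
  shows "x j = y j"
  using Zp_coherent[OF assms(1,4)] Zp_coherent[OF assms(2,4)] assms(3) by simp

lemma Zp_at_0: "x \<in> Zp p \<Longrightarrow> x 0 = 0"
  using Zp_D(1,2)[of x p 0] by simp

lemma zp_of_nat_in_Zp: "p > 0 \<Longrightarrow> zp_of_nat p a \<in> Zp p"
  unfolding Zp_def zp_of_nat_def by (auto simp: mod_mod_cancel le_imp_power_dvd)

lemma zp_of_nat_eq_iff: "zp_of_nat p a k = zp_of_nat p b k \<longleftrightarrow> a mod p ^ k = b mod p ^ k"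
  unfolding zp_of_nat_def by (metis of_nat_eq_iff of_nat_mod of_nat_power)

lemma zp_diff_in_Zp:
  assumes "p > 0" "x \<in> Zp p" "y \<in> Zp p"
  shows "zp_diff p x y \<in> Zp p"
proof -
  have "(x n - y n) mod int p ^ n = (x (Suc n) - y (Suc n)) mod int p ^ Suc n mod int p ^ n" for n
    using Zp_D(3)[OF assms(2), of n] Zp_D(3)[OF assms(3), of n]
    by (simp add: mod_diff_eq mod_mod_cancel le_imp_power_dvd)
  note coherent = this
  have "0 < int p ^ n" for n
    using assms(1) by simp
  then show ?thesis
    unfolding Zp_def zp_diff_def using coherent by (intro CollectI allI conjI) simp_all
qed

lemma zp_diff_eq_0_iff:
  assumes "x \<in> Zp p" "y \<in> Zp p"
  shows "zp_diff p x y k = 0 \<longleftrightarrow> x k = y k"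
  using Zp_D(1,2)[OF assms(1), of k] Zp_D(1,2)[OF assms(2), of k]
  by (simp add: zp_diff_def mod_eq_0_iff_dvd mod_eq_dvd_iff[symmetric])

lemma zp_val_ge_iff:
  assumes "x \<in> Zp p"
  shows "enat k \<le> zp_val p x \<longleftrightarrow> x k = 0"
proof (cases "\<forall>n. x n = 0")
  case True
  then show ?thesis unfolding zp_val_def by simp
next
  case False
  define L where "L = (LEAST n. x (Suc n) \<noteq> 0)"
  have val: "zp_val p x = enat L"
    using False unfolding zp_val_def L_def by simp
  obtain n where "x (Suc n) \<noteq> 0"
    using False Zp_at_0[OF assms] by (metis not0_implies_Suc)
  then have x_L: "x (Suc L) \<noteq> 0"
    unfolding L_def by (rule LeastI)
  show ?thesis
  proof
    assume "enat k \<le> zp_val p x"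
    then have "k \<le> L"
      using val by simp
    then show "x k = 0"
    proof (cases k)
      case (Suc j)
      then have "j < L"
        using \<open>k \<le> L\<close> by simp
      then show ?thesis
        using Suc not_less_Least[of j "\<lambda>n. x (Suc n) \<noteq> 0"] unfolding L_def by simp
    qed (simp add: Zp_at_0[OF assms])
  next
    assume "x k = 0"
    then have "k \<le> L"
      using x_L Zp_coherent[OF assms, of "Suc L" k] by (cases "Suc L \<le> k") auto
    then show "enat k \<le> zp_val p x"
      using val by simp
  qed
qed

lemma zp_abs_le_iff:
  assumes "p > 1"
  shows "zp_abs p x \<le> (1 / real p) ^ k \<longleftrightarrow> enat k \<le> zp_val p x"
proof -
  have "0 < 1 / real p" "1 / real p < 1"
    using assms by auto
  then show ?thesis
    unfolding zp_abs_def by (cases "zp_val p x") simp_all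
qed

lemma zp_val_diff_ge_iff:
  assumes "p > 0" "x \<in> Zp p" "y \<in> Zp p"
  shows "enat k \<le> zp_val p (zp_diff p x y) \<longleftrightarrow> x k = y k"
  using zp_val_ge_iff[OF zp_diff_in_Zp[OF assms]] zp_diff_eq_0_iff[OF assms(2,3)] by simp

lemma zp_abs_diff_le_iff:
  assumes "p > 1" "x \<in> Zp p" "y \<in> Zp p"
  shows "zp_abs p (zp_diff p x y) \<le> (1 / real p) ^ k \<longleftrightarrow> x k = y k"
  using zp_abs_le_iff[OF assms(1)] zp_val_diff_ge_iff[OF _ assms(2,3)] assms(1) by simp

lemma zp_continuous_maps_Zp: "zp_continuous p f \<Longrightarrow> x \<in> Zp p \<Longrightarrow> f x \<in> Zp p"
  unfolding zp_continuous_def by blast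

lemma tau_exists:
  fixes p m :: nat and \<Phi> :: "nat \<Rightarrow> nat"
  assumes "p > 1" "strict_mono \<Phi>"
  shows "\<exists>h. m < p ^ (1 + \<Phi> h)"
proof
  have "m < 2 ^ m" by simp
  also have "\<dots> \<le> p ^ m"
    using assms(1) by (simp add: power_mono)
  also have "\<dots> \<le> p ^ (1 + \<Phi> m)"
    using assms strict_mono_imp_increasing[OF assms(2), of m] by (intro power_increasing) auto
  finally show "m < p ^ (1 + \<Phi> m)" .
qed

lemma less_pow_tau:
  assumes "p > 1" "strict_mono \<Phi>"
  shows "m < p ^ (1 + \<Phi> (tau p \<Phi> m))"
  unfolding tau_def by (rule LeastI_ex) (rule tau_exists[OF assms])

lemma pow_le_if_less_tau: "h < tau p \<Phi> m \<Longrightarrow> p ^ (1 + \<Phi> h) \<le> m"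
  unfolding tau_def using not_less_Least[of h "\<lambda>h. m < p ^ (1 + \<Phi> h)"] by simp

lemma mod_pow_eq_sum_digits: "m mod p ^ k = (\<Sum>i<k. digit p m i * p ^ i)"
proof (induction k)
  case (Suc k)
  have "m mod p ^ Suc k = p ^ k * (m div p ^ k mod p) + m mod p ^ k"
    by (metis mod_mult2_eq power_Suc2)
  then show ?case
    using Suc by (simp add: digit_def mult.commute)
qed simp

lemma Mblock_eq:
  assumes "p > 1" "strict_mono \<Phi>" "tau p \<Phi> m > 0"
  shows "Mblock p \<Phi> m = m - m mod p ^ (1 + \<Phi> (tau p \<Phi> m - 1))"
proof -
  define a where "a = \<Phi> (tau p \<Phi> m - 1)"
  define b where "b = \<Phi> (tau p \<Phi> m)"
  define g where "g = (\<lambda>i. digit p m i * p ^ i)"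
  have "a < b"
    unfolding a_def b_def using assms(2,3) by (simp add: strict_mono_less)
  then have "sum g {0..<Suc a} + sum g {Suc a..<Suc b} = sum g {0..<Suc b}"
    by (intro sum.atLeastLessThan_concat) auto
  moreover have "Mblock p \<Phi> m = sum g {Suc a..<Suc b}"
    unfolding Mblock_def g_def a_def b_def by (simp add: atLeastLessThanSuc_atLeastAtMost)
  ultimately have "sum g {..<Suc a} + Mblock p \<Phi> m = sum g {..<Suc b}"
    by (simp add: atLeast0LessThan)
  moreover have "sum g {..<Suc b} = m"
    using mod_pow_eq_sum_digits[of m p "Suc b"] less_pow_tau[OF assms(1,2), of m]
    unfolding g_def b_def by simp
  moreover have "sum g {..<Suc a} = m mod p ^ Suc a"
    unfolding g_def by (rule mod_pow_eq_sum_digits[symmetric])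
  ultimately have "Mblock p \<Phi> m = m - m mod p ^ Suc a"
    by linarith
  then show ?thesis
    unfolding a_def by simp
qed

lemma Bcoef_eq_if_tau_pos:
  assumes "p > 1" "strict_mono \<Phi>" "tau p \<Phi> m > 0"
  shows "Bcoef p \<Phi> f m =
    zp_diff p (f (zp_of_nat p m)) (f (zp_of_nat p (m mod p ^ (1 + \<Phi> (tau p \<Phi> m - 1)))))"
proof -
  have "p ^ (1 + \<Phi> 0) \<le> m"
    using pow_le_if_less_tau[OF assms(3)] .
  moreover have "m - Mblock p \<Phi> m = m mod p ^ (1 + \<Phi> (tau p \<Phi> m - 1))"
    using Mblock_eq[OF assms] by (simp add: diff_diff_cancel mod_less_eq_dividend)
  ultimately show ?thesis
    unfolding Bcoef_def by simp
qed

lemma Bcoef_val_ge_tau_iff: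
  assumes "p > 1" "strict_mono \<Phi>" "zp_continuous p f"
  shows "enat (tau p \<Phi> m) \<le> zp_val p (Bcoef p \<Phi> f m) \<longleftrightarrow>
    f (zp_of_nat p m) (tau p \<Phi> m) =
    f (zp_of_nat p (m mod p ^ (1 + \<Phi> (tau p \<Phi> m - 1)))) (tau p \<Phi> m)"
proof -
  have in_Zp: "f (zp_of_nat p a) \<in> Zp p" for a
    using assms(1,3) by (simp add: zp_continuous_maps_Zp zp_of_nat_in_Zp)
  show ?thesis
  proof (cases "tau p \<Phi> m = 0")
    case True
    then show ?thesis
      using Zp_at_0[OF in_Zp] by (simp add: zero_enat_def[symmetric])
  next
    case False
    then show ?thesis
      using assms(1) by (simp add: Bcoef_eq_if_tau_pos[OF assms(1,2)] zp_val_diff_ge_iff in_Zp)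
  qed
qed

definition residue_compatible :: "nat \<Rightarrow> (nat \<Rightarrow> nat) \<Rightarrow> (zp \<Rightarrow> zp) \<Rightarrow> bool" where
  "residue_compatible p \<Phi> f \<longleftrightarrow>
    (\<forall>n>0. \<forall>x\<in>Zp p. \<forall>y\<in>Zp p. x (1 + \<Phi> (n - 1)) = y (1 + \<Phi> (n - 1)) \<longrightarrow> f x n = f y n)"

lemma FF_iff_residue_compatible:
  assumes "p > 1" "zp_continuous p f"
  shows "f \<in> FF p \<Phi> \<longleftrightarrow> residue_compatible p \<Phi> f"
proof -
  have "(zp_abs p (zp_diff p x y) \<le> (1 / real p) ^ (1 + \<Phi> (n - 1)) \<longrightarrow>
      zp_abs p (zp_diff p (f x) (f y)) \<le> (1 / real p) ^ n) \<longleftrightarrow>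
    (x (1 + \<Phi> (n - 1)) = y (1 + \<Phi> (n - 1)) \<longrightarrow> f x n = f y n)"
    if "x \<in> Zp p" "y \<in> Zp p" for x y n
    using assms that by (simp only: zp_abs_diff_le_iff zp_continuous_maps_Zp)
  then show ?thesis
    using assms(2) unfolding FF_def residue_compatible_def by auto
qed

lemma zp_continuous_residue_attained_at_nat:
  assumes "p > 1" "zp_continuous p f" "x \<in> Zp p"
  shows "\<exists>c. zp_of_nat p c K = x K \<and> f (zp_of_nat p c) n = f x n"
proof -
  have q: "0 < 1 / real p" "1 / real p < 1"
    using assms(1) by auto
  then obtain d where "d > 0" and near_x: "\<forall>y\<in>Zp p. zp_abs p (zp_diff p x y) < d \<longrightarrow>
      zp_abs p (zp_diff p (f x) (f y)) < (1 / real p) ^ n"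
    using assms(2,3) unfolding zp_continuous_def by (meson zero_less_power)
  obtain j0 where j0: "(1 / real p) ^ j0 < d"
    using real_arch_pow_inv[OF \<open>d > 0\<close> q(2)] by blast
  define j where "j = j0 + K"
  define c where "c = nat (x j)"
  have c_in_Zp: "zp_of_nat p c \<in> Zp p"
    using assms(1) by (simp add: zp_of_nat_in_Zp)
  have c_j: "zp_of_nat p c j = x j"
    using Zp_D(1,2)[OF assms(3), of j] unfolding zp_of_nat_def c_def by simp
  then have "zp_abs p (zp_diff p x (zp_of_nat p c)) \<le> (1 / real p) ^ j"
    using zp_abs_diff_le_iff[OF assms(1,3) c_in_Zp] by simp
  also have "\<dots> \<le> (1 / real p) ^ j0"
    unfolding j_def using q by (simp add: power_decreasing)
  finally have "zp_abs p (zp_diff p (f x) (f (zp_of_nat p c))) \<le> (1 / real p) ^ n"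
    using near_x c_in_Zp j0 by fastforce
  then have "f (zp_of_nat p c) n = f x n"
    using assms c_in_Zp by (simp add: zp_abs_diff_le_iff zp_continuous_maps_Zp)
  moreover have "zp_of_nat p c K = x K"
    using Zp_eq_at_le[OF c_in_Zp assms(3) c_j] unfolding j_def by simp
  ultimately show ?thesis
    by blast
qed

lemma residues_on_nat_if_block_residues:
  assumes "p > 1" "strict_mono \<Phi>" "zp_continuous p f"
    and block: "\<forall>m. f (zp_of_nat p m) (tau p \<Phi> m) =
      f (zp_of_nat p (m mod p ^ (1 + \<Phi> (tau p \<Phi> m - 1)))) (tau p \<Phi> m)"
    and "n > 0"
  shows "f (zp_of_nat p m) n = f (zp_of_nat p (m mod p ^ (1 + \<Phi> (n - 1)))) n"
proof (induction m rule: less_induct)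
  case (less m)
  define K where "K = 1 + \<Phi> (n - 1)"
  have in_Zp: "f (zp_of_nat p a) \<in> Zp p" for a
    using assms(1,3) by (simp add: zp_continuous_maps_Zp zp_of_nat_in_Zp)
  show ?case
  proof (cases "m < p ^ K")
    case True
    then show ?thesis
      unfolding K_def by simp
  next
    case False
    define t where "t = tau p \<Phi> m"
    define m' where "m' = m mod p ^ (1 + \<Phi> (t - 1))"
    have "\<not> t \<le> n - 1"
    proof
      assume "t \<le> n - 1"
      then have "p ^ (1 + \<Phi> t) \<le> p ^ K"
        using assms(1,2) unfolding K_def by (simp add: strict_mono_less_eq)
      then show False
        using less_pow_tau[OF assms(1,2), of m] False unfolding t_def by simp
    qed
    then have "n \<le> t" "0 < t"
      using \<open>n > 0\<close> by auto
    have "m' < p ^ (1 + \<Phi> (t - 1))"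
      unfolding m'_def using assms(1) by simp
    also have "\<dots> \<le> m"
      using pow_le_if_less_tau[of "t - 1" p \<Phi> m] \<open>0 < t\<close> unfolding t_def by simp
    finally have "m' < m" .
    have "f (zp_of_nat p m) t = f (zp_of_nat p m') t"
      using block unfolding m'_def t_def by blast
    then have "f (zp_of_nat p m) n = f (zp_of_nat p m') n"
      using Zp_eq_at_le[OF in_Zp in_Zp] \<open>n \<le> t\<close> by blast
    also have "\<dots> = f (zp_of_nat p (m' mod p ^ K)) n"
      using less \<open>m' < m\<close> unfolding K_def by simp
    also have "m' mod p ^ K = m mod p ^ K"
    proof -
      have "p ^ K dvd p ^ (1 + \<Phi> (t - 1))"
        using \<open>n \<le> t\<close> assms(2) unfolding K_def
        by (intro le_imp_power_dvd) (simp add: strict_mono_less_eq)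
      then show ?thesis
        unfolding m'_def by (simp add: mod_mod_cancel)
    qed
    finally show ?thesis
      unfolding K_def .
  qed
qed

lemma residue_compatible_iff_block_residues:
  assumes "p > 1" "strict_mono \<Phi>" "zp_continuous p f"
  shows "residue_compatible p \<Phi> f \<longleftrightarrow>
    (\<forall>m. f (zp_of_nat p m) (tau p \<Phi> m) =
      f (zp_of_nat p (m mod p ^ (1 + \<Phi> (tau p \<Phi> m - 1)))) (tau p \<Phi> m))"
    (is "_ \<longleftrightarrow> ?block")
proof
  assume compatible: "residue_compatible p \<Phi> f"
  have in_Zp: "zp_of_nat p a \<in> Zp p" for a
    using assms(1) by (simp add: zp_of_nat_in_Zp)
  show ?block
  proof
    fix m
    let ?t = "tau p \<Phi> m" and ?K = "1 + \<Phi> (tau p \<Phi> m - 1)"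
    show "f (zp_of_nat p m) ?t = f (zp_of_nat p (m mod p ^ ?K)) ?t"
    proof (cases "?t = 0")
      case True
      then show ?thesis
        using Zp_at_0[OF zp_continuous_maps_Zp[OF assms(3) in_Zp]] by simp
    next
      case False
      have "zp_of_nat p m ?K = zp_of_nat p (m mod p ^ ?K) ?K"
        by (simp add: zp_of_nat_eq_iff)
      then show ?thesis
        using compatible False in_Zp unfolding residue_compatible_def by simp
    qed
  qed
next
  assume block: ?block
  show "residue_compatible p \<Phi> f"
    unfolding residue_compatible_def
  proof (intro allI impI ballI)
    fix n x y
    assume "0 < n" "x \<in> Zp p" "y \<in> Zp p" and x_y: "x (1 + \<Phi> (n - 1)) = y (1 + \<Phi> (n - 1))"
    define K where "K = 1 + \<Phi> (n - 1)"
    obtain a where a: "zp_of_nat p a K = x K" "f (zp_of_nat p a) n = f x n"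
      using zp_continuous_residue_attained_at_nat[OF assms(1,3) \<open>x \<in> Zp p\<close>] by blast
    obtain b where b: "zp_of_nat p b K = y K" "f (zp_of_nat p b) n = f y n"
      using zp_continuous_residue_attained_at_nat[OF assms(1,3) \<open>y \<in> Zp p\<close>] by blast
    have "zp_of_nat p a K = zp_of_nat p b K"
      using a(1) b(1) x_y unfolding K_def by simp
    then have "a mod p ^ K = b mod p ^ K"
      by (simp only: zp_of_nat_eq_iff)
    then show "f x n = f y n"
      using a(2) b(2) residues_on_nat_if_block_residues[OF assms block \<open>0 < n\<close>]
      unfolding K_def by metis
  qed
qed

theorem proposition2:
  fixes p :: nat and \<Phi> :: "nat \<Rightarrow> nat" and f :: "zp \<Rightarrow> zp"
  assumes "prime p" and "strict_mono \<Phi>" and "zp_continuous p f"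
  shows "f \<in> FF p \<Phi> \<longleftrightarrow> (\<forall>m. zp_val p (Bcoef p \<Phi> f m) \<ge> enat (tau p \<Phi> m))"
proof -
  have "p > 1"
    using assms(1) prime_gt_1_nat by blast
  then show ?thesis
    using assms(2,3) by (simp add: FF_iff_residue_compatible residue_compatible_iff_block_residues
        Bcoef_val_ge_tau_iff)
qed

end
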